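(* Let $K\ge2$, let the ground-truth clusters $\mathcal{C}_1,\dots,\mathcal{C}_K$ have size $N/K$ each, let $\mathcal{R}$ satisfy Assumption 1, and let $1\ge p\ge q\ge r\ge s\ge0$. Define $\tilde{\mathcal{A}}\in\mathbb{R}^{N\times N}$ by $\tilde{\mathcal{A}}_{ii}=p$ and, for $i\neq j$, $\tilde{\mathcal{A}}_{ij}=p$ if $\pi(v_i)=\pi(v_j)$, $R_{ij}=1$; $q$ if $\pi(v_i)\neq\pi(v_j)$, $R_{ij}=1$; $r$ if $\pi(v_i)=\pi(v_j)$, $R_{ij}=0$; $s$ if $\pi(v_i)\neq\pi(v_j)$, $R_{ij}=0$. With $\mathbf{u}_1,\dots,\mathbf{u}_{K-1}$ defined by $u_{ki}=1$ if $v_i\in\mathcal{C}_k$ and $u_{ki}=-\frac1{K-1}$ otherwise, we have $$\tilde{\mathcal{A}}\mathbf{1}=\lambda_1\mathbf{1},\quad \lambda_1=qd+s(N-d)+(p-q)\frac dK+(r-s)\frac{N-d}K,$$ and, for each $k\in[K-1]$, $\tilde{\mathcal{A}}\mathbf{u}_k=\lambda_{1+k}\mathbf{u}_k$ with $\lambda_{1+k}=(p-q)\frac dK+(r-s)\frac{N-d}K$.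
   Context: $\mathcal{V}=\{v_1,\dots,v_N\}$, $\pi:\mathcal{V}\to[K]$ with $\mathcal{C}_k=\{v_i:\pi(v_i)=k\}$. $\mathcal{R}$ is an undirected graph on $\mathcal{V}$ with symmetric adjacency $\mathbf{R}\in\{0,1\}^{N\times N}$. Assumption 1: $\mathcal{R}$ is $d$-regular for some $K\le d\le N$, $R_{ii}=1$ for all $i$ (self-loops counted in the degree), and each node is adjacent in $\mathcal{R}$ to exactly $d/K$ nodes of $\mathcal{C}_k$ for every $k\in[K]$ (including the self-loop). $\mathbf{1}$ is the all-ones vector. (The matrix $\tilde{\mathcal{A}}$ equals $\mathbb{E}[\mathbf{A}]+p\mathbf{I}$ for $\mathbf{A}$ drawn from the representation-aware SBM with these parameters.) *)

theory Defs
  imports Complex_Main "HOL-Library.Multiset"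
begin

text \<open>Nodes are v_0,...,v_(N-1), indexed by i < N. The cluster assignment
 cl maps nodes to [K] = {1..K}. The graph R is given by a boolean adjacency relation.\<close>

definition Atilde :: "(nat \<Rightarrow> nat) \<Rightarrow> (nat \<Rightarrow> nat \<Rightarrow> bool) \<Rightarrow> real \<Rightarrow> real \<Rightarrow> real \<Rightarrow> real
    \<Rightarrow> nat \<Rightarrow> nat \<Rightarrow> real" where
  "Atilde cl R p q r s i j =
     (if i = j then p
      else if cl i = cl j \<and> R i j then p
      else if cl i \<noteq> cl j \<and> R i j then q
      else if cl i = cl j \<and> \<not> R i j then r
      else s)"

definition mat_vec :: "nat \<Rightarrow> (nat \<Rightarrow> nat \<Rightarrow> real) \<Rightarrow> (nat \<Rightarrow> real) \<Rightarrow> nat \<Rightarrow> real" where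
  "mat_vec N A x i = (\<Sum>j<N. A i j * x j)"

definition u_vec :: "nat \<Rightarrow> (nat \<Rightarrow> nat) \<Rightarrow> nat \<Rightarrow> nat \<Rightarrow> real" where
  "u_vec K cl k i = (if cl i = k then 1 else - 1 / (real K - 1))"

end

theory Submission
  imports Defs
begin

text \<open>Every node carries a self-loop and lies in its own cluster, so the diagonal needs no
  special treatment: \<open>Atilde = s J + (q - s) R + (r - s) C + (p - q - r + s) (R \<circ> C)\<close>, where
  \<open>C\<close> is the same-cluster matrix and \<open>\<circ>\<close> the entrywise product. Applied to the indicator
  vector \<open>e\<^sub>k\<close> of cluster \<open>k\<close>, each term counts the nodes of an intersection, and equal cluster
  sizes together with the balance of the graph give \<open>Atilde e\<^sub>k = \<gamma> \<one> + \<mu> e\<^sub>k\<close>, with \<open>\<mu>\<close> the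
  claimed eigenvalue. Both \<open>\<one>\<close> and \<open>u\<^sub>k\<close> are combinations of \<open>\<one>\<close> and \<open>e\<^sub>k\<close>, and in
  \<open>u\<^sub>k\<close> the \<open>\<gamma>\<close>-parts cancel.\<close>

lemma Atilde_eq_of_bool:
  assumes "R i i"
  shows "Atilde cl R p q r s i j = s + (q - s) * of_bool (R i j) + (r - s) * of_bool (cl j = cl i)
           + (p - q - r + s) * of_bool (R i j \<and> cl j = cl i)"
  using assms unfolding Atilde_def by (cases "i = j") (auto simp: algebra_simps)

lemma sum_lessThan_of_bool:
  "(\<Sum>j<N. of_bool (P j) :: real) = real (card {j. j < (N::nat) \<and> P j})"
  by (simp add: Int_def)

lemma mat_vec_Atilde_indicator:
  assumes "R i i"
  shows "mat_vec N (Atilde cl R p q r s) (\<lambda>j. of_bool (P j)) i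
       = s * card {j. j < N \<and> P j} + (q - s) * card {j. j < N \<and> R i j \<and> P j}
         + (r - s) * card {j. j < N \<and> cl j = cl i \<and> P j}
         + (p - q - r + s) * card {j. j < N \<and> R i j \<and> cl j = cl i \<and> P j}"
proof -
  have "mat_vec N (Atilde cl R p q r s) (\<lambda>j. of_bool (P j)) i
      = (\<Sum>j<N. s * of_bool (P j) + (q - s) * of_bool (R i j \<and> P j)
           + (r - s) * of_bool (cl j = cl i \<and> P j)
           + (p - q - r + s) * of_bool (R i j \<and> cl j = cl i \<and> P j))"
    unfolding mat_vec_def Atilde_eq_of_bool[where R = R and i = i, OF assms]
    by (intro sum.cong) (auto simp: algebra_simps)
  then show ?thesis
    by (simp only: sum.distrib flip: sum_distrib_left sum_lessThan_of_bool)
qed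

lemma mat_vec_linear:
  "mat_vec N A (\<lambda>j. a * x j + b * y j) i = a * mat_vec N A x i + b * mat_vec N A y i"
  unfolding mat_vec_def by (simp add: algebra_simps sum.distrib sum_distrib_left)

locale balanced_graph =
  fixes N K d :: nat and cl :: "nat \<Rightarrow> nat" and R :: "nat \<Rightarrow> nat \<Rightarrow> bool"
  assumes cl_range: "\<forall>i<N. cl i \<in> {1..K}"
    and cluster_size: "\<forall>k\<in>{1..K}. real (card {i. i < N \<and> cl i = k}) = real N / real K"
    and R_refl: "\<forall>i<N. R i i"
    and R_reg: "\<forall>i<N. card {j. j < N \<and> R i j} = d"
    and R_bal: "\<forall>i<N. \<forall>k\<in>{1..K}. real (card {j. j < N \<and> R i j \<and> cl j = k}) = real d / real K"
begin

lemma mat_vec_Atilde_ones: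
  assumes "i < N"
  shows "mat_vec N (Atilde cl R p q r s) (\<lambda>_. 1) i
       = q * d + s * (real N - d) + (p - q) * d / K + (r - s) * (real N - d) / K"
proof -
  have "R i i" using R_refl assms by blast
  note row = mat_vec_Atilde_indicator[of R i N cl p q r s "\<lambda>_. True", OF this]
  have "cl i \<in> {1..K}" using cl_range assms by blast
  then have "real K > 0"
    and size: "real (card {j. j < N \<and> cl j = cl i}) = N / K"
    and bal: "real (card {j. j < N \<and> R i j \<and> cl j = cl i}) = d / K"
    using cluster_size R_bal assms by auto
  have reg: "card {j. j < N \<and> R i j} = d" using R_reg assms by blast
  show ?thesis
    using row \<open>real K > 0\<close> by (simp add: size bal reg field_simps)
qed

lemma mat_vec_Atilde_cluster_indicator:
  assumes "i < N" and "k \<in> {1..K}"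
  shows "mat_vec N (Atilde cl R p q r s) (\<lambda>j. of_bool (cl j = k)) i
       = s * N / K + (q - s) * d / K
         + ((p - q) * d / K + (r - s) * (real N - d) / K) * of_bool (cl i = k)"
proof -
  have "R i i" using R_refl assms(1) by blast
  note row = mat_vec_Atilde_indicator[of R i N cl p q r s "\<lambda>j. cl j = k", OF this]
  have "real K > 0" using assms(2) by simp
  have size: "real (card {j. j < N \<and> cl j = k}) = N / K" using cluster_size assms(2) by blast
  have bal: "real (card {j. j < N \<and> R i j \<and> cl j = k}) = d / K" using R_bal assms by blast
  show ?thesis
  proof (cases "cl i = k")
    case True
    then have "{j. j < N \<and> cl j = cl i \<and> cl j = k} = {j. j < N \<and> cl j = k}"
      "{j. j < N \<and> R i j \<and> cl j = cl i \<and> cl j = k} = {j. j < N \<and> R i j \<and> cl j = k}"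
      by auto
    with True \<open>real K > 0\<close> show ?thesis
      unfolding row by (simp only: size bal of_bool_eq(2) mult_1_right) (simp add: field_simps)
  next
    case False
    then have "{j. j < N \<and> cl j = cl i \<and> cl j = k} = {}"
      "{j. j < N \<and> R i j \<and> cl j = cl i \<and> cl j = k} = {}"
      by auto
    with False show ?thesis
      unfolding row by (simp only: size bal card.empty of_nat_0 of_bool_eq(1)) simp
  qed
qed

lemma mat_vec_Atilde_u_vec:
  assumes "2 \<le> K" and "i < N" and "k \<in> {1..K}"
  shows "mat_vec N (Atilde cl R p q r s) (u_vec K cl k) i
       = ((p - q) * d / K + (r - s) * (real N - d) / K) * u_vec K cl k i"
proof -
  define \<gamma> where "\<gamma> = s * N / K + (q - s) * d / K"
  define \<mu> where "\<mu> = (p - q) * d / K + (r - s) * (real N - d) / K"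
  define c where "c = 1 / (real K - 1)"
  have "real K - 1 > 0" using assms(1) by simp
  then have c_K: "c * real K = 1 + c" by (simp add: c_def field_simps)
  have ind: "mat_vec N (Atilde cl R p q r s) (\<lambda>j. of_bool (cl j = k)) i
      = \<gamma> + \<mu> * of_bool (cl i = k)"
    unfolding mat_vec_Atilde_cluster_indicator[OF assms(2,3)] \<gamma>_def \<mu>_def ..
  have "real K > 0" using assms(1) by simp
  then have ones: "mat_vec N (Atilde cl R p q r s) (\<lambda>_. 1) i = real K * \<gamma> + \<mu>"
    by (simp add: mat_vec_Atilde_ones[OF assms(2)] \<gamma>_def \<mu>_def field_simps)
  have u_eq: "u_vec K cl k = (\<lambda>j. (1 + c) * of_bool (cl j = k) + (- c) * 1)"
    by (auto simp: u_vec_def c_def)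
  have "mat_vec N (Atilde cl R p q r s) (u_vec K cl k) i
      = (1 + c) * mat_vec N (Atilde cl R p q r s) (\<lambda>j. of_bool (cl j = k)) i
        + (- c) * mat_vec N (Atilde cl R p q r s) (\<lambda>_. 1) i"
    unfolding u_eq by (rule mat_vec_linear)
  also have "\<dots> = \<mu> * ((1 + c) * of_bool (cl i = k) + (- c) * 1)"
    unfolding ind ones using c_K by algebra
  finally show ?thesis
    unfolding u_eq \<mu>_def .
qed

end

theorem lemma4:
  fixes N K d :: nat and cl :: "nat \<Rightarrow> nat" and R :: "nat \<Rightarrow> nat \<Rightarrow> bool"
    and p q r s :: real
  assumes K2: "K \<ge> 2"
    and pi_range: "\<forall>i<N. cl i \<in> {1..K}"
    and cluster_size: "\<forall>k\<in>{1..K}. real (card {i. i < N \<and> cl i = k}) = real N / real K"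
    and R_sym: "\<forall>i<N. \<forall>j<N. R i j = R j i"
    and R_refl: "\<forall>i<N. R i i"
    and Kd: "K \<le> d" and dN: "d \<le> N"
    and R_reg: "\<forall>i<N. card {j. j < N \<and> R i j} = d"
    and R_bal: "\<forall>i<N. \<forall>k\<in>{1..K}. real (card {j. j < N \<and> R i j \<and> cl j = k}) = real d / real K"
    and prob: "1 \<ge> p" "p \<ge> q" "q \<ge> r" "r \<ge> s" "s \<ge> 0"
  shows "(\<forall>i<N. mat_vec N (Atilde cl R p q r s) (\<lambda>_. 1) i
            = (q * d + s * (real N - d) + (p - q) * d / K + (r - s) * (real N - d) / K) * 1)
       \<and> (\<forall>k\<in>{1..K-1}. \<forall>i<N. mat_vec N (Atilde cl R p q r s) (u_vec K cl k) i
            = ((p - q) * d / K + (r - s) * (real N - d) / K) * u_vec K cl k i)"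
proof -
  interpret balanced_graph N K d cl R
    using pi_range cluster_size R_refl R_reg R_bal by unfold_locales
  show ?thesis
    using mat_vec_Atilde_ones mat_vec_Atilde_u_vec K2 by auto
qed

end
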